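(* Let $v_1,v_2\in\Sigma^*$ (not necessarily distinct), let $u_1$ be a $v_1$-minimal word and $u_2$ a $v_2$-minimal word, and suppose $\mathrm{supp}(u_1)\neq\mathrm{supp}(u_2)$. Then $\mathrm{supp}(u_1)\cap\mathrm{supp}(u_2)=\emptyset$.
   Context: Let $\mathcal{A}=\langle Q,\Sigma,\delta\rangle$ be a synchronizing automaton with $n$ states $q_1,\dots,q_n$. Each word acts linearly on $\mathbb{C}Q$ by $q\mapsto q\cdot u$, preserving $w^\perp=\{x:\langle x,q_1+\dots+q_n\rangle=0\}$; let $\rho:\Sigma^*\to\mathbb{M}_{n-1}(\mathbb{C})$ be the induced representation and $\mathcal{R}$ the $\mathbb{C}$-algebra generated by $\rho(\Sigma^* )$. Write $\mathcal{R}/\mathrm{Rad}(\mathcal{R})\cong\prod_{i=1}^k\mathbb{M}_{n_i}(\mathbb{C})$ (Jacobson radical, Wedderburn–Artin) and let $\theta_i:\Sigma^*\to\mathbb{M}_{n_i}(\mathbb{C})$ be $\rho$ followed by the quotient map and the $i$-th projection; $0_i$ is the zero matrix. The support of a word $z$ is $\mathrm{supp}(z)=\{i:\theta_i(z)\neq0_i\}$. For $v\in\Sigma^*$, a word $u\in\Sigma^*v\Sigma^*$ is $v$-minimal, and $\mathrm{supp}(u)$ is a ($v$-)minimal section, if $\mathrm{supp}(u)\neq\emptyset$ and there is no $z\in\Sigma^*v\Sigma^*$ with $\emptyset\neq\mathrm{supp}(z)\subsetneq\mathrm{supp}(u)$. *)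

theory Defs
  imports Complex_Main "Jordan_Normal_Form.Matrix"
begin

text \<open>Automaton with states 0..<n (state q_(i+1) is index i), alphabet the finite type 'a,
  transition function delta.  Words are lists.\<close>

fun ext_delta :: "(nat \<Rightarrow> 'a \<Rightarrow> nat) \<Rightarrow> nat \<Rightarrow> 'a list \<Rightarrow> nat" where
  "ext_delta d q [] = q"
| "ext_delta d q (a # w) = ext_delta d (d q a) w"

definition is_automaton :: "nat \<Rightarrow> (nat \<Rightarrow> 'a \<Rightarrow> nat) \<Rightarrow> bool" where
  "is_automaton n d \<longleftrightarrow> n \<ge> 1 \<and> (\<forall>q<n. \<forall>a. d q a < n)"

definition synchronizing :: "nat \<Rightarrow> (nat \<Rightarrow> 'a \<Rightarrow> nat) \<Rightarrow> bool" where
  "synchronizing n d \<longleftrightarrow> (\<exists>w. \<forall>p<n. \<forall>q<n. ext_delta d p w = ext_delta d q w)"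

text \<open>The representation rho on w-perp (sum of coordinates zero), written as an
  (n-1)x(n-1) matrix w.r.t. the basis b_i = q_i - q_n (i = 1..n-1), vectors as row vectors
  acting on the right: row i of rho(u) is the coordinate vector of b_i . u
  = q_(i.u) - q_(n.u) = b_(i.u) - b_(n.u)  (with b_n = 0).\<close>

definition rho :: "nat \<Rightarrow> (nat \<Rightarrow> 'a \<Rightarrow> nat) \<Rightarrow> 'a list \<Rightarrow> complex mat" where
  "rho n d u = mat (n - 1) (n - 1)
     (\<lambda>(i, j). (if ext_delta d i u = j then 1 else 0)
             - (if ext_delta d (n - 1) u = j then 1 else 0))"

text \<open>The complex algebra generated by a set S of m x m matrices (smallest set containing S
  and 0, closed under sum, scalar multiples and products; here S contains the identity
  matrix rho of the empty word, so the algebra is unital).\<close>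

inductive_set gen_alg :: "nat \<Rightarrow> complex mat set \<Rightarrow> complex mat set" for m S where
  gen: "A \<in> S \<Longrightarrow> A \<in> gen_alg m S"
| zero: "0\<^sub>m m m \<in> gen_alg m S"
| add: "A \<in> gen_alg m S \<Longrightarrow> B \<in> gen_alg m S \<Longrightarrow> A + B \<in> gen_alg m S"
| smult: "A \<in> gen_alg m S \<Longrightarrow> c \<cdot>\<^sub>m A \<in> gen_alg m S"
| mult: "A \<in> gen_alg m S \<Longrightarrow> B \<in> gen_alg m S \<Longrightarrow> A * B \<in> gen_alg m S"

definition rep_alg :: "nat \<Rightarrow> (nat \<Rightarrow> 'a \<Rightarrow> nat) \<Rightarrow> complex mat set" where
  "rep_alg n d = gen_alg (n - 1) (range (rho n d))"

definition left_ideal :: "complex mat set \<Rightarrow> complex mat set \<Rightarrow> bool" where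
  "left_ideal R L \<longleftrightarrow> L \<subseteq> R \<and> L \<noteq> {} \<and> (\<forall>x\<in>L. \<forall>y\<in>L. x + y \<in> L)
     \<and> (\<forall>r\<in>R. \<forall>x\<in>L. r * x \<in> L)"

definition maximal_left_ideal :: "complex mat set \<Rightarrow> complex mat set \<Rightarrow> bool" where
  "maximal_left_ideal R L \<longleftrightarrow> left_ideal R L \<and> L \<noteq> R
     \<and> (\<forall>L'. left_ideal R L' \<and> L' \<noteq> R \<and> L \<subseteq> L' \<longrightarrow> L' = L)"

definition jacobson_radical :: "complex mat set \<Rightarrow> complex mat set" where
  "jacobson_radical R = {x \<in> R. \<forall>L. maximal_left_ideal R L \<longrightarrow> x \<in> L}"

text \<open>A Wedderburn--Artin decomposition of R/Rad(R): a surjective unital C-algebra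
  homomorphism phi from R onto the product of M_(ns i)(C), i < k, whose kernel is Rad(R)
  (equivalently an isomorphism R/Rad(R) = prod M_(ns i)(C)).  Elements of the product are
  represented as functions nat => complex mat, only the components i < k being relevant.\<close>

definition wedderburn_decomp ::
  "nat \<Rightarrow> complex mat set \<Rightarrow> nat \<Rightarrow> (nat \<Rightarrow> nat) \<Rightarrow> (complex mat \<Rightarrow> nat \<Rightarrow> complex mat) \<Rightarrow> bool" where
  "wedderburn_decomp m R k ns phi \<longleftrightarrow>
     (\<forall>i<k. ns i \<ge> 1)
   \<and> (\<forall>x\<in>R. \<forall>i<k. phi x i \<in> carrier_mat (ns i) (ns i))
   \<and> (\<forall>x\<in>R. \<forall>y\<in>R. \<forall>i<k. phi (x + y) i = phi x i + phi y i)
   \<and> (\<forall>x\<in>R. \<forall>c. \<forall>i<k. phi (c \<cdot>\<^sub>m x) i = c \<cdot>\<^sub>m phi x i)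
   \<and> (\<forall>x\<in>R. \<forall>y\<in>R. \<forall>i<k. phi (x * y) i = phi x i * phi y i)
   \<and> (\<forall>i<k. phi (1\<^sub>m m) i = 1\<^sub>m (ns i))
   \<and> (\<forall>f. (\<forall>i<k. f i \<in> carrier_mat (ns i) (ns i)) \<longrightarrow> (\<exists>x\<in>R. \<forall>i<k. phi x i = f i))
   \<and> (\<forall>x\<in>R. (\<forall>i<k. phi x i = 0\<^sub>m (ns i) (ns i)) \<longleftrightarrow> x \<in> jacobson_radical R)"

text \<open>theta_i(z) = phi(rho z) i; support of a word.\<close>

definition supp ::
  "nat \<Rightarrow> (nat \<Rightarrow> 'a \<Rightarrow> nat) \<Rightarrow> nat \<Rightarrow> (nat \<Rightarrow> nat) \<Rightarrow> (complex mat \<Rightarrow> nat \<Rightarrow> complex mat)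
     \<Rightarrow> 'a list \<Rightarrow> nat set" where
  "supp n d k ns phi z = {i. i < k \<and> phi (rho n d z) i \<noteq> 0\<^sub>m (ns i) (ns i)}"

definition contains_factor :: "'a list \<Rightarrow> 'a list \<Rightarrow> bool" where
  "contains_factor v u \<longleftrightarrow> (\<exists>x y. u = x @ v @ y)"

definition v_minimal ::
  "nat \<Rightarrow> (nat \<Rightarrow> 'a \<Rightarrow> nat) \<Rightarrow> nat \<Rightarrow> (nat \<Rightarrow> nat) \<Rightarrow> (complex mat \<Rightarrow> nat \<Rightarrow> complex mat)
     \<Rightarrow> 'a list \<Rightarrow> 'a list \<Rightarrow> bool" where
  "v_minimal n d k ns phi v u \<longleftrightarrow>
     contains_factor v u \<and> supp n d k ns phi u \<noteq> {}
   \<and> \<not> (\<exists>z. contains_factor v z \<and> supp n d k ns phi z \<noteq> {}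
            \<and> supp n d k ns phi z \<subset> supp n d k ns phi u)"

end

theory Submission
  imports Defs
begin

text \<open>If some component \<open>i\<close> lay in both supports, then, the component being a full matrix
  algebra (hence a prime ring) and the images of words spanning it, some word \<open>w\<close> would give
  \<open>\<theta>\<^sub>i(u\<^sub>1 w u\<^sub>2) \<noteq> 0\<close>. Since \<open>\<theta>\<close> is multiplicative, the support of \<open>z = u\<^sub>1 w u\<^sub>2\<close> is a nonempty
  subset of both supports, and \<open>z\<close> contains both \<open>v\<^sub>1\<close> and \<open>v\<^sub>2\<close> as factors, so minimality forces
  \<open>supp(u\<^sub>1) = supp(z) = supp(u\<^sub>2)\<close>.\<close>

lemma ext_delta_append: "ext_delta d q (u @ w) = ext_delta d (ext_delta d q u) w"
  by (induct u arbitrary: q) auto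

lemma ext_delta_less: "is_automaton n d \<Longrightarrow> q < n \<Longrightarrow> ext_delta d q u < n"
  by (induct u arbitrary: q) (auto simp: is_automaton_def)

lemma sum_indicator_upto_last:
  fixes f :: "nat \<Rightarrow> complex"
  assumes "p < n" "f (n - 1) = 0"
  shows "(\<Sum>j\<in>{0..<n-1}. (if p = j then 1 else 0) * f j) = f p"
proof (cases "p < n - 1")
  case True
  have "(\<Sum>j\<in>{0..<n-1}. (if p = j then 1 else 0) * f j) = (\<Sum>j\<in>{0..<n-1}. if p = j then f j else 0)"
    by (intro sum.cong) auto
  with True show ?thesis by (simp add: sum.delta)
next
  case False
  with assms have "p = n - 1" by simp
  with assms show ?thesis by simp
qed

lemma rho_append:
  assumes "is_automaton n d"
  shows "rho n d (u @ w) = rho n d u * rho n d w"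
proof (rule eq_matI)
  fix i j assume ij: "i < dim_row (rho n d u * rho n d w)" "j < dim_col (rho n d u * rho n d w)"
  define f where "f q = (if ext_delta d q w = j then 1 else 0)
    - (if ext_delta d (n - 1) w = j then 1 else 0 :: complex)" for q
  have f_last: "f (n - 1) = 0" by (simp add: f_def)
  have targets: "ext_delta d i u < n" "ext_delta d (n - 1) u < n"
    using ij assms ext_delta_less[OF assms] by (auto simp: rho_def is_automaton_def)
  have "(rho n d u * rho n d w) $$ (i, j)
      = (\<Sum>l\<in>{0..<n-1}. ((if ext_delta d i u = l then 1 else 0)
          - (if ext_delta d (n - 1) u = l then 1 else 0)) * f l)"
    using ij by (simp add: rho_def scalar_prod_def f_def)
  also have "\<dots> = (\<Sum>l\<in>{0..<n-1}. (if ext_delta d i u = l then 1 else 0) * f l)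
      - (\<Sum>l\<in>{0..<n-1}. (if ext_delta d (n - 1) u = l then 1 else 0) * f l)"
    by (simp add: left_diff_distrib sum_subtractf)
  also have "\<dots> = f (ext_delta d i u) - f (ext_delta d (n - 1) u)"
    using sum_indicator_upto_last[of _ n f, OF targets(1) f_last]
      sum_indicator_upto_last[of _ n f, OF targets(2) f_last]
    by simp
  also have "\<dots> = rho n d (u @ w) $$ (i, j)"
    using ij by (simp add: rho_def f_def ext_delta_append)
  finally show "rho n d (u @ w) $$ (i, j) = (rho n d u * rho n d w) $$ (i, j)" ..
qed (auto simp: rho_def)

lemma rho_in_rep_alg: "rho n d w \<in> rep_alg n d"
  unfolding rep_alg_def by (rule gen_alg.gen) simp

lemma wedderburn_decomp_carrier:
  "wedderburn_decomp m R k ns phi \<Longrightarrow> x \<in> R \<Longrightarrow> i < k \<Longrightarrow> phi x i \<in> carrier_mat (ns i) (ns i)"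
  unfolding wedderburn_decomp_def by blast

lemma wedderburn_decomp_add:
  "wedderburn_decomp m R k ns phi \<Longrightarrow> x \<in> R \<Longrightarrow> y \<in> R \<Longrightarrow> i < k
    \<Longrightarrow> phi (x + y) i = phi x i + phi y i"
  unfolding wedderburn_decomp_def by blast

lemma wedderburn_decomp_smult:
  "wedderburn_decomp m R k ns phi \<Longrightarrow> x \<in> R \<Longrightarrow> i < k \<Longrightarrow> phi (c \<cdot>\<^sub>m x) i = c \<cdot>\<^sub>m phi x i"
  unfolding wedderburn_decomp_def by blast

lemma wedderburn_decomp_mult:
  "wedderburn_decomp m R k ns phi \<Longrightarrow> x \<in> R \<Longrightarrow> y \<in> R \<Longrightarrow> i < k
    \<Longrightarrow> phi (x * y) i = phi x i * phi y i"
  unfolding wedderburn_decomp_def by blast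

lemma wedderburn_decomp_surj:
  "wedderburn_decomp m R k ns phi \<Longrightarrow> \<forall>i<k. f i \<in> carrier_mat (ns i) (ns i)
    \<Longrightarrow> \<exists>x\<in>R. \<forall>i<k. phi x i = f i"
  unfolding wedderburn_decomp_def by blast

lemma wedderburn_decomp_component_onto:
  assumes "wedderburn_decomp m R k ns phi" "i < k" "E \<in> carrier_mat (ns i) (ns i)"
  obtains x where "x \<in> R" "phi x i = E"
proof -
  have "\<forall>j<k. (\<lambda>j. if j = i then E else 0\<^sub>m (ns j) (ns j)) j \<in> carrier_mat (ns j) (ns j)"
    using assms(3) by simp
  from wedderburn_decomp_surj[OF assms(1) this] show ?thesis
    using assms(2) that by fastforce
qed

lemma gen_alg_sandwich_zero:
  assumes W: "wedderburn_decomp m (gen_alg m S) k ns phi" and ik: "i < k"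
    and S_mult: "\<And>s t. s \<in> S \<Longrightarrow> t \<in> S \<Longrightarrow> s * t \<in> S"
    and x: "x \<in> gen_alg m S"
  shows "M \<in> carrier_mat (ns i) (ns i) \<Longrightarrow> N \<in> carrier_mat (ns i) (ns i)
    \<Longrightarrow> \<forall>s\<in>S. M * phi s i * N = 0\<^sub>m (ns i) (ns i) \<Longrightarrow> M * phi x i * N = 0\<^sub>m (ns i) (ns i)"
  using x
proof (induction x arbitrary: M N rule: gen_alg.induct)
  case (gen A)
  then show ?case by blast
next
  case zero
  have "phi (0 \<cdot>\<^sub>m 0\<^sub>m m m) i = 0 \<cdot>\<^sub>m phi (0\<^sub>m m m) i"
    using wedderburn_decomp_smult[OF W gen_alg.zero ik] .
  moreover have "0 \<cdot>\<^sub>m phi (0\<^sub>m m m) i = 0\<^sub>m (ns i) (ns i)"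
    using wedderburn_decomp_carrier[OF W gen_alg.zero ik] by (intro eq_matI) auto
  ultimately have "phi (0\<^sub>m m m) i = 0\<^sub>m (ns i) (ns i)" by simp
  with zero.prems show ?case by simp
next
  case (add A B)
  have cA: "phi A i \<in> carrier_mat (ns i) (ns i)" and cB: "phi B i \<in> carrier_mat (ns i) (ns i)"
    using wedderburn_decomp_carrier[OF W _ ik] add.hyps by blast+
  have "M * phi (A + B) i * N = M * phi A i * N + M * phi B i * N"
    using add.prems(1,2) cA cB
    by (simp add: wedderburn_decomp_add[OF W add.hyps ik] mult_add_distrib_mat[of M "ns i" "ns i"]
        add_mult_distrib_mat[of _ "ns i" "ns i"])
  then show ?case using add.IH add.prems by simp
next
  case (smult A c)
  have "M * phi (c \<cdot>\<^sub>m A) i * N = c \<cdot>\<^sub>m (M * phi A i * N)"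
    using smult.prems(1,2) wedderburn_decomp_carrier[OF W smult.hyps ik]
    by (simp add: wedderburn_decomp_smult[OF W smult.hyps ik] mult_smult_distrib[of M "ns i"]
        mult_smult_assoc_mat[of _ "ns i" "ns i"])
  then show ?case using smult.IH smult.prems by simp
next
  case (mult A B)
  note assoc = assoc_mult_mat[of _ "ns i" "ns i" _ "ns i" _ "ns i"]
  have cA: "phi A i \<in> carrier_mat (ns i) (ns i)" and cB: "phi B i \<in> carrier_mat (ns i) (ns i)"
    using wedderburn_decomp_carrier[OF W _ ik] mult.hyps by blast+
  have cS: "phi s i \<in> carrier_mat (ns i) (ns i)" if "s \<in> S" for s
    using wedderburn_decomp_carrier[OF W gen_alg.gen[OF that] ik] .
  have phi_S_mult: "phi (s * t) i = phi s i * phi t i" if "s \<in> S" "t \<in> S" for s t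
    using wedderburn_decomp_mult[OF W gen_alg.gen gen_alg.gen ik] that .
  have A_zero: "M * phi A i * (phi t i * N) = 0\<^sub>m (ns i) (ns i)" if t: "t \<in> S" for t
  proof (rule mult.IH(1)[OF mult.prems(1)])
    show "phi t i * N \<in> carrier_mat (ns i) (ns i)" using cS[OF t] mult.prems(2) by simp
    show "\<forall>s\<in>S. M * phi s i * (phi t i * N) = 0\<^sub>m (ns i) (ns i)"
    proof
      fix s assume s: "s \<in> S"
      have "M * phi s i * (phi t i * N) = M * phi (s * t) i * N"
        using mult.prems(1,2) cS[OF s] cS[OF t] by (simp add: phi_S_mult[OF s t] assoc)
      then show "M * phi s i * (phi t i * N) = 0\<^sub>m (ns i) (ns i)"
        using mult.prems(3) S_mult[OF s t] by simp
    qed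
  qed
  have "M * phi A i * phi B i * N = 0\<^sub>m (ns i) (ns i)"
  proof (rule mult.IH(2))
    show "M * phi A i \<in> carrier_mat (ns i) (ns i)" using mult.prems(1) cA by simp
    show "\<forall>s\<in>S. M * phi A i * phi s i * N = 0\<^sub>m (ns i) (ns i)"
      using A_zero mult.prems(1,2) cA cS by (metis assoc mult_carrier_mat)
  qed (fact mult.prems(2))
  moreover have "M * phi (A * B) i * N = M * phi A i * phi B i * N"
    using mult.prems(1) cA cB by (simp add: wedderburn_decomp_mult[OF W mult.hyps ik] assoc)
  ultimately show ?case by simp
qed

lemma mat_nonzero_entry:
  assumes "A \<in> carrier_mat m m" "A \<noteq> 0\<^sub>m m m"
  obtains p q where "p < m" "q < m" "A $$ (p, q) \<noteq> 0"
  using assms by (metis carrier_matD(1,2) eq_matI index_zero_mat(1,2,3))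

text \<open>The full matrix ring is prime: a matrix unit \<open>E\<^sub>q\<^sub>r\<close> links a nonzero entry in column \<open>q\<close>
  of \<open>A\<close> with one in row \<open>r\<close> of \<open>B\<close>.\<close>

lemma mat_prime:
  fixes A B :: "complex mat"
  assumes A: "A \<in> carrier_mat m m" and B: "B \<in> carrier_mat m m"
    and "A \<noteq> 0\<^sub>m m m" "B \<noteq> 0\<^sub>m m m"
  obtains E where "E \<in> carrier_mat m m" "A * E * B \<noteq> 0\<^sub>m m m"
proof -
  obtain p q where pq: "p < m" "q < m" "A $$ (p, q) \<noteq> 0"
    using mat_nonzero_entry[OF A \<open>A \<noteq> 0\<^sub>m m m\<close>] .
  obtain r t where rt: "r < m" "t < m" "B $$ (r, t) \<noteq> 0"
    using mat_nonzero_entry[OF B \<open>B \<noteq> 0\<^sub>m m m\<close>] .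
  define E :: "complex mat" where "E = mat m m (\<lambda>(x, y). if x = q \<and> y = r then 1 else 0)"
  have E: "E \<in> carrier_mat m m" by (simp add: E_def)
  have AE: "(A * E) $$ (p, y) = (if y = r then A $$ (p, q) else 0)" if "y < m" for y
  proof -
    have "(A * E) $$ (p, y) = (\<Sum>x\<in>{0..<m}. A $$ (p, x) * E $$ (x, y))"
      using A E pq that by (simp add: scalar_prod_def)
    also have "\<dots> = (\<Sum>x\<in>{0..<m}. if x = q then (if y = r then A $$ (p, q) else 0) else 0)"
      using that by (intro sum.cong) (auto simp: E_def)
    finally show ?thesis using pq by (simp add: sum.delta)
  qed
  have "(A * E * B) $$ (p, t) = (\<Sum>y\<in>{0..<m}. (A * E) $$ (p, y) * B $$ (y, t))"
    using A E B pq rt by (simp add: scalar_prod_def del: assoc_mult_mat)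
  also have "\<dots> = (\<Sum>y\<in>{0..<m}. if y = r then A $$ (p, q) * B $$ (r, t) else 0)"
    by (intro sum.cong) (auto simp: AE)
  finally have "(A * E * B) $$ (p, t) \<noteq> 0" using pq rt by (simp add: sum.delta)
  with pq rt have "A * E * B \<noteq> 0\<^sub>m m m" by auto
  with E show ?thesis using that by blast
qed

lemma theta_append:
  assumes "is_automaton n d" "wedderburn_decomp (n - 1) (rep_alg n d) k ns phi" "i < k"
  shows "phi (rho n d (u @ w)) i = phi (rho n d u) i * phi (rho n d w) i"
  using wedderburn_decomp_mult[OF assms(2) rho_in_rep_alg rho_in_rep_alg assms(3)]
  by (simp add: rho_append[OF assms(1)])

lemma supp_append_subset:
  assumes A: "is_automaton n d" and W: "wedderburn_decomp (n - 1) (rep_alg n d) k ns phi"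
  shows "supp n d k ns phi (u @ w) \<subseteq> supp n d k ns phi u \<inter> supp n d k ns phi w"
proof
  fix i assume i: "i \<in> supp n d k ns phi (u @ w)"
  then have ik: "i < k" by (simp add: supp_def)
  have cu: "phi (rho n d u) i \<in> carrier_mat (ns i) (ns i)"
    and cw: "phi (rho n d w) i \<in> carrier_mat (ns i) (ns i)"
    using wedderburn_decomp_carrier[OF W rho_in_rep_alg ik] by blast+
  from i cu cw show "i \<in> supp n d k ns phi u \<inter> supp n d k ns phi w"
    by (auto simp: supp_def theta_append[OF A W ik])
qed

lemma supp_sandwich:
  assumes A: "is_automaton n d" and W: "wedderburn_decomp (n - 1) (rep_alg n d) k ns phi"
    and i: "i \<in> supp n d k ns phi u1" "i \<in> supp n d k ns phi u2"
  obtains w where "i \<in> supp n d k ns phi (u1 @ w @ u2)"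
proof -
  let ?\<theta> = "\<lambda>u. phi (rho n d u) i"
  have ik: "i < k" using i by (simp add: supp_def)
  have c\<theta>: "?\<theta> u \<in> carrier_mat (ns i) (ns i)" for u
    using wedderburn_decomp_carrier[OF W rho_in_rep_alg ik] .
  have W': "wedderburn_decomp (n - 1) (gen_alg (n - 1) (range (rho n d))) k ns phi"
    using W by (simp add: rep_alg_def)
  have range_mult: "s * t \<in> range (rho n d)" if "s \<in> range (rho n d)" "t \<in> range (rho n d)" for s t
    using that by (auto simp flip: rho_append[OF A])
  obtain E where E: "E \<in> carrier_mat (ns i) (ns i)" "?\<theta> u1 * E * ?\<theta> u2 \<noteq> 0\<^sub>m (ns i) (ns i)"
    using mat_prime[OF c\<theta> c\<theta>] i by (auto simp: supp_def)
  obtain x where x: "x \<in> rep_alg n d" "phi x i = E"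
    using wedderburn_decomp_component_onto[OF W ik E(1)] .
  have "\<exists>w. ?\<theta> u1 * ?\<theta> w * ?\<theta> u2 \<noteq> 0\<^sub>m (ns i) (ns i)"
  proof (rule ccontr)
    assume "\<nexists>w. ?\<theta> u1 * ?\<theta> w * ?\<theta> u2 \<noteq> 0\<^sub>m (ns i) (ns i)"
    then have "\<forall>s\<in>range (rho n d). ?\<theta> u1 * phi s i * ?\<theta> u2 = 0\<^sub>m (ns i) (ns i)" by blast
    with gen_alg_sandwich_zero[OF W' ik range_mult] x(1) c\<theta>
    have "?\<theta> u1 * phi x i * ?\<theta> u2 = 0\<^sub>m (ns i) (ns i)" by (simp add: rep_alg_def)
    with E x(2) show False by simp
  qed
  then obtain w where "?\<theta> u1 * ?\<theta> w * ?\<theta> u2 \<noteq> 0\<^sub>m (ns i) (ns i)" ..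
  then have "i \<in> supp n d k ns phi (u1 @ w @ u2)"
    using ik by (simp add: supp_def theta_append[OF A W ik] assoc_mult_mat[OF c\<theta> c\<theta> c\<theta>])
  then show ?thesis ..
qed

lemma contains_factor_append_left: "contains_factor v u \<Longrightarrow> contains_factor v (u @ w)"
  unfolding contains_factor_def by (metis append.assoc)

lemma contains_factor_append_right: "contains_factor v u \<Longrightarrow> contains_factor v (w @ u)"
  unfolding contains_factor_def by (metis append.assoc)

lemma v_minimal_supp_eq:
  assumes "v_minimal n d k ns phi v u" "contains_factor v z"
    and "supp n d k ns phi z \<noteq> {}" "supp n d k ns phi z \<subseteq> supp n d k ns phi u"
  shows "supp n d k ns phi z = supp n d k ns phi u"
  using assms unfolding v_minimal_def by blast

theorem mainTheorem7:
  fixes n :: nat and d :: "nat \<Rightarrow> 'a::finite \<Rightarrow> nat"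
    and k :: nat and ns :: "nat \<Rightarrow> nat" and phi :: "complex mat \<Rightarrow> nat \<Rightarrow> complex mat"
    and v1 v2 u1 u2 :: "'a list"
  assumes "is_automaton n d"
    and "synchronizing n d"
    and "wedderburn_decomp (n - 1) (rep_alg n d) k ns phi"
    and "v_minimal n d k ns phi v1 u1"
    and "v_minimal n d k ns phi v2 u2"
    and "supp n d k ns phi u1 \<noteq> supp n d k ns phi u2"
  shows "supp n d k ns phi u1 \<inter> supp n d k ns phi u2 = {}"
proof (rule ccontr)
  assume "supp n d k ns phi u1 \<inter> supp n d k ns phi u2 \<noteq> {}"
  then obtain i where "i \<in> supp n d k ns phi u1" "i \<in> supp n d k ns phi u2" by blast
  then obtain w where "i \<in> supp n d k ns phi (u1 @ w @ u2)"
    using supp_sandwich[OF assms(1,3)] by blast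
  moreover have "supp n d k ns phi (u1 @ w @ u2) \<subseteq> supp n d k ns phi u1"
    and "supp n d k ns phi (u1 @ w @ u2) \<subseteq> supp n d k ns phi u2"
    using supp_append_subset[OF assms(1,3), of u1 "w @ u2"]
      supp_append_subset[OF assms(1,3), of "u1 @ w" u2] by auto
  moreover have "contains_factor v1 (u1 @ w @ u2)" "contains_factor v2 (u1 @ w @ u2)"
    using assms(4,5) contains_factor_append_left contains_factor_append_right
    unfolding v_minimal_def by (metis append.assoc)+
  ultimately have "supp n d k ns phi u1 = supp n d k ns phi u2"
    using v_minimal_supp_eq[OF assms(4)] v_minimal_supp_eq[OF assms(5)] by blast
  with assms(6) show False ..
qed

end
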